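(* Let $d\ge1$, $0<s_0<s_1$, $0<\alpha_0<\alpha_1$, $W=[s_0,s_1]\times[\alpha_0,\alpha_1]$, and $g\in L^2_0(\mathbb{T}^d;\mathbb{C})$ with Fourier coefficients $\hat g_k$. For $k\in\mathbb{Z}^d\setminus\{0\}$ let $E_k(s,\alpha)=\frac{\alpha}{\alpha+|k|^{2s}}$ and, for the partial derivatives of $\mathcal{S}(s,\alpha)=(E_k(s,\alpha)\hat g_k)_{k}$, let $\partial^i_\alpha\mathcal{S}(s,\alpha)=(\partial_\alpha^iE_k(s,\alpha)\hat g_k)_{k\neq0}$, $\partial_s^i\mathcal{S}(s,\alpha)=(\partial_s^iE_k(s,\alpha)\hat g_k)_{k\ne0}$, $\partial_{s,\alpha}\mathcal{S}(s,\alpha)=(\partial_s\partial_\alpha E_k(s,\alpha)\hat g_k)_{k\ne0}$. Then there are constants $M_{\alpha_1,i}>0$ ($i=1,2,3$) and $M_{\alpha_1}>0$ depending only on $\alpha_1$ (and $i$) such that for every $\varepsilon>0$, $i\in\{1,2,3\}$ and $(s,\alpha)\in W$: $$\|\partial^i_\alpha\mathcal{S}(s,\alpha)\|_{\ell^2}\le\sum_{k\ne0}\frac{i!}{|k|^{2si}}|\hat g_k|,\qquad \|\partial^i_s\mathcal{S}(s,\alpha)\|_{\ell^2}\le\sum_{k\ne0}\frac{M_{\alpha_1,i}}{\varepsilon^i|k|^{2s-i\varepsilon}}|\hat g_k|,$$ $$\|\partial_{s,\alpha}\mathcal{S}(s,\alpha)\|_{\ell^2}\le\sum_{k\ne0}\frac{M_{\alpha_1}}{\varepsilon|k|^{2s-\varepsilon}}|\hat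 g_k|.$$
   Context: $\mathbb{T}^d=\mathbb{R}^d/(2\pi\mathbb{Z})^d$; $L^2_0$ denotes zero-mean square-integrable functions; $\hat g_k=\int_{\mathbb{T}^d}g(x)e^{-ik\cdot x}dx$. *)

theory Defs
  imports "HOL-Analysis.Analysis"
begin

text \<open>The torus T^d is represented by the fundamental cube [0,2pi]^d; points are
  functions nat => real (extensional outside {..<d}), with the product Lebesgue measure.\<close>

definition torus_measure :: "nat \<Rightarrow> (nat \<Rightarrow> real) measure" where
  "torus_measure d = PiM {..<d} (\<lambda>_. lborel)"

definition torus_box :: "nat \<Rightarrow> (nat \<Rightarrow> real) set" where
  "torus_box d = PiE {..<d} (\<lambda>_. {0..2*pi})"

definition lattice :: "nat \<Rightarrow> (nat \<Rightarrow> int) set" where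
  "lattice d = {k. \<forall>i\<ge>d. k i = 0}"

definition nonzero_lattice :: "nat \<Rightarrow> (nat \<Rightarrow> int) set" where
  "nonzero_lattice d = lattice d - {\<lambda>_. 0}"

definition knorm :: "nat \<Rightarrow> (nat \<Rightarrow> int) \<Rightarrow> real" where
  "knorm d k = sqrt (\<Sum>i<d. (real_of_int (k i))^2)"

definition fourier_coeff :: "nat \<Rightarrow> ((nat \<Rightarrow> real) \<Rightarrow> complex) \<Rightarrow> (nat \<Rightarrow> int) \<Rightarrow> complex" where
  "fourier_coeff d g k =
     set_lebesgue_integral (torus_measure d) (torus_box d)
       (\<lambda>x. g x * cis (- (\<Sum>i<d. real_of_int (k i) * x i)))"

definition L2_0 :: "nat \<Rightarrow> ((nat \<Rightarrow> real) \<Rightarrow> complex) \<Rightarrow> bool" where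
  "L2_0 d g \<longleftrightarrow> g \<in> borel_measurable (torus_measure d)
     \<and> set_integrable (torus_measure d) (torus_box d) (\<lambda>x. (cmod (g x))^2)
     \<and> set_lebesgue_integral (torus_measure d) (torus_box d) g = 0"

definition Ek :: "nat \<Rightarrow> (nat \<Rightarrow> int) \<Rightarrow> real \<Rightarrow> real \<Rightarrow> real" where
  "Ek d k s a = a / (a + knorm d k powr (2 * s))"

text \<open>l2 norm of a family over A bounded by the (possibly infinite) sum of b over A:
  if the right-hand side diverges the inequality is trivially true (= +infinity);
  otherwise the family is in l2 and its l2 norm is bounded by the sum.\<close>
definition l2_bounded_by :: "'k set \<Rightarrow> ('k \<Rightarrow> complex) \<Rightarrow> ('k \<Rightarrow> real) \<Rightarrow> bool" where
  "l2_bounded_by A f b \<longleftrightarrow>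
     (b summable_on A \<longrightarrow>
        ((\<lambda>k. (cmod (f k))^2) summable_on A \<and>
         sqrt (\<Sum>\<^sub>\<infinity>k\<in>A. (cmod (f k))^2) \<le> (\<Sum>\<^sub>\<infinity>k\<in>A. b k)))"

end

theory Submission
  imports Defs
begin

text \<open>All bounds hold term by term, so each l2 norm is bounded by the l1 norm of the termwise
  majorant. In \<alpha>, E_k = \<alpha> / (\<alpha> + x) with x = |k|^(2s) has i-th derivative
  (-1)^(i+1) i! x / (\<alpha> + x)^(i+1), of modulus at most i! / x^i. In s, E_k is the logistic
  function t \<mapsto> \<alpha> / (\<alpha> + exp (c t)) with c = 2 ln |k|; since E' = - c E (1 - E), its i-th
  derivative is c^i E (1 - E) times a polynomial in E bounded by 1 on [0,1] (for i \<le> 3), and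
  E (1 - E) \<le> \<alpha> / |k|^(2s). The logarithmic loss (2 ln |k|)^i is absorbed by
  ln |k| \<le> |k|^\<epsilon> / \<epsilon>, which gives M_i = 2^i \<alpha>1 and M' = 2.\<close>

lemma sum_power2_le_power2_sum:
  fixes b :: "'k \<Rightarrow> real"
  assumes "finite F" "\<And>k. k \<in> F \<Longrightarrow> 0 \<le> b k"
  shows "(\<Sum>k\<in>F. (b k)^2) \<le> (\<Sum>k\<in>F. b k)^2"
proof -
  have "(\<Sum>k\<in>F. (b k)^2) \<le> (\<Sum>k\<in>F. b k * sum b F)"
    using assms by (auto simp: power2_eq_square intro!: sum_mono mult_left_mono member_le_sum)
  also have "\<dots> = (\<Sum>k\<in>F. b k)^2"
    by (simp add: sum_distrib_right power2_eq_square)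
  finally show ?thesis .
qed

lemma l2_bounded_by_pointwise:
  assumes bound: "\<And>k. k \<in> A \<Longrightarrow> cmod (f k) \<le> b k"
  shows "l2_bounded_by A f b"
  unfolding l2_bounded_by_def
proof
  assume b: "b summable_on A"
  have b_nonneg: "\<And>k. k \<in> A \<Longrightarrow> 0 \<le> b k"
    using bound norm_ge_zero order_trans by blast
  have finite_sums: "(\<Sum>k\<in>F. (cmod (f k))^2) \<le> (\<Sum>\<^sub>\<infinity>k\<in>A. b k)^2" if "finite F" "F \<subseteq> A" for F
  proof -
    have "(\<Sum>k\<in>F. (cmod (f k))^2) \<le> (\<Sum>k\<in>F. (b k)^2)"
      using that bound by (intro sum_mono power_mono) auto
    also have "\<dots> \<le> (\<Sum>k\<in>F. b k)^2"
      using that b_nonneg by (intro sum_power2_le_power2_sum) auto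
    also have "\<dots> \<le> (\<Sum>\<^sub>\<infinity>k\<in>A. b k)^2"
      using that b_nonneg by (intro power_mono finite_sum_le_infsum b sum_nonneg) auto
    finally show ?thesis .
  qed
  have summable: "(\<lambda>k. (cmod (f k))^2) summable_on A"
    using finite_sums by (intro nonneg_bdd_above_summable_on bdd_aboveI) auto
  have "sqrt (\<Sum>\<^sub>\<infinity>k\<in>A. (cmod (f k))^2) \<le> sqrt ((\<Sum>\<^sub>\<infinity>k\<in>A. b k)^2)"
    using finite_sums by (intro real_sqrt_le_mono infsum_le_finite_sums summable)
  also have "\<dots> = (\<Sum>\<^sub>\<infinity>k\<in>A. b k)"
    using b_nonneg by (simp add: infsum_nonneg)
  finally show "(\<lambda>k. (cmod (f k))^2) summable_on A \<and> sqrt (\<Sum>\<^sub>\<infinity>k\<in>A. (cmod (f k))^2) \<le> (\<Sum>\<^sub>\<infinity>k\<in>A. b k)"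
    using summable by simp
qed

lemma l2_bounded_by_of_real_mult:
  assumes "\<And>k. k \<in> A \<Longrightarrow> \<bar>c k\<bar> \<le> B k"
  shows "l2_bounded_by A (\<lambda>k. complex_of_real (c k) * z k) (\<lambda>k. B k * cmod (z k))"
  using assms by (intro l2_bounded_by_pointwise) (simp add: norm_mult mult_right_mono)

lemma has_real_derivative_divide_power:
  fixes x a C :: real
  assumes "a + x \<noteq> 0"
  shows "((\<lambda>b. C / (b + x)^Suc n) has_real_derivative - (real (Suc n) * C / (a + x)^(n + 2))) (at a)"
proof -
  have "((\<lambda>b. (b + x)^Suc n) has_real_derivative (1 + real n) * (1 * (a + x)^n)) (at a)"
    by (intro DERIV_power_Suc derivative_eq_intros) auto
  from DERIV_divide[OF DERIV_const this] show ?thesis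
  proof (rule DERIV_cong)
    have "(a + x)^n * (a + x)^(n + 2) = (a + x)^Suc n * (a + x)^Suc n"
      by (simp flip: power_add)
    then show "(0 * (a + x)^Suc n - C * ((1 + real n) * (1 * (a + x)^n))) / ((a + x)^Suc n * (a + x)^Suc n)
        = - (real (Suc n) * C / (a + x)^(n + 2))"
      using assms by (simp add: divide_simps)
  qed (use assms in simp)
qed

lemma higher_deriv_frac_add:
  fixes x a :: real
  assumes "- x < a"
  shows "(deriv ^^ Suc i) (\<lambda>b. b / (b + x)) a = (-1)^i * fact (Suc i) * x / (a + x)^(i + 2)"
  using assms
proof (induction i arbitrary: a)
  case 0
  then have "a + x \<noteq> 0" by simp
  then have "((\<lambda>b. b / (b + x)) has_real_derivative x / (a + x)^2) (at a)"
    by (auto intro!: derivative_eq_intros simp: field_simps power2_eq_square)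
  then show ?case by (simp add: DERIV_imp_deriv power2_eq_square)
next
  case (Suc i)
  define C where "C = (-1)^i * fact (Suc i) * x"
  have "\<forall>\<^sub>F b in nhds a. b \<in> {- x<..}"
    using Suc.prems by (intro eventually_nhds_in_open) auto
  then have "\<forall>\<^sub>F b in nhds a. (deriv ^^ Suc i) (\<lambda>b. b / (b + x)) b = C / (b + x)^Suc (Suc i)"
    by eventually_elim (unfold C_def, subst Suc.IH, simp_all)
  then have "(deriv ^^ Suc (Suc i)) (\<lambda>b. b / (b + x)) a = deriv (\<lambda>b. C / (b + x)^Suc (Suc i)) a"
    by (simp add: deriv_cong_ev)
  also have "\<dots> = - (real (Suc (Suc i)) * C / (a + x)^(Suc i + 2))"
    using Suc.prems by (intro DERIV_imp_deriv has_real_derivative_divide_power) simp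
  finally show ?case by (simp add: C_def)
qed

lemma abs_higher_deriv_frac_add_le:
  fixes x a :: real
  assumes "0 < x" "0 \<le> a" "0 < i"
  shows "\<bar>(deriv ^^ i) (\<lambda>b. b / (b + x)) a\<bar> \<le> fact i / x^i"
proof -
  obtain j where i: "i = Suc j" using assms(3) gr0_implies_Suc by blast
  have "\<bar>(deriv ^^ i) (\<lambda>b. b / (b + x)) a\<bar> = fact i * x / (a + x)^(j + 2)"
    using higher_deriv_frac_add[of x a j] assms by (simp add: i abs_mult abs_divide power_abs)
  also have "\<dots> \<le> fact i * x / x^(j + 2)"
    using assms by (intro divide_left_mono power_mono) auto
  also have "\<dots> = fact i / x^i"
    using assms by (simp add: i)
  finally show ?thesis .
qed

definition logistic :: "real \<Rightarrow> real \<Rightarrow> real \<Rightarrow> real" where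
  "logistic a c t = a / (a + exp (c * t))"

lemma logistic_bounds:
  assumes "0 < a"
  shows "0 < logistic a c t" "logistic a c t < 1"
  using assms by (auto simp: logistic_def add_pos_pos)

lemma has_real_derivative_logistic:
  assumes "0 < a"
  shows "(logistic a c has_real_derivative - c * (logistic a c t * (1 - logistic a c t))) (at t within S)"
proof -
  have "a + exp (c * t) \<noteq> 0" using assms exp_gt_zero[of "c * t"] by linarith
  then show ?thesis
    unfolding logistic_def [abs_def]
    by (auto intro!: derivative_eq_intros simp: field_simps power2_eq_square)
qed

lemma higher_deriv_logistic:
  fixes a c :: real
  assumes a: "0 < a"
  defines "L \<equiv> logistic a c" and "w \<equiv> \<lambda>t. logistic a c t * (1 - logistic a c t)"
  shows "(deriv ^^ 1) L = (\<lambda>t. - (c * w t))"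
    and "(deriv ^^ 2) L = (\<lambda>t. c^2 * w t * (1 - 2 * L t))"
    and "(deriv ^^ 3) L = (\<lambda>t. - (c^3 * w t * ((1 - 2 * L t)^2 - 2 * w t)))"
proof -
  note L' = has_real_derivative_logistic[OF a, of c, folded L_def]
  have d1: "deriv L = (\<lambda>t. - (c * w t))"
    by (rule ext, rule DERIV_imp_deriv) (use L' in \<open>simp add: w_def L_def\<close>)
  have d2: "deriv (\<lambda>t. - (c * w t)) = (\<lambda>t. c^2 * w t * (1 - 2 * L t))"
    by (rule ext, rule DERIV_imp_deriv, unfold w_def L_def)
      (auto intro!: derivative_eq_intros has_real_derivative_logistic[OF a] simp: algebra_simps power2_eq_square)
  have d3: "deriv (\<lambda>t. c^2 * w t * (1 - 2 * L t)) = (\<lambda>t. - (c^3 * w t * ((1 - 2 * L t)^2 - 2 * w t)))"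
    by (rule ext, rule DERIV_imp_deriv, unfold w_def L_def)
      (auto intro!: derivative_eq_intros has_real_derivative_logistic[OF a] simp: algebra_simps power2_eq_square power3_eq_cube)
  show "(deriv ^^ 1) L = (\<lambda>t. - (c * w t))" using d1 by simp
  show "(deriv ^^ 2) L = (\<lambda>t. c^2 * w t * (1 - 2 * L t))" using d1 d2 by (simp add: numeral_2_eq_2)
  show "(deriv ^^ 3) L = (\<lambda>t. - (c^3 * w t * ((1 - 2 * L t)^2 - 2 * w t)))"
    using d1 d2 d3 by (simp add: numeral_3_eq_3 numeral_2_eq_2)
qed

lemma logistic_mult_one_minus_le:
  assumes "0 < a"
  shows "logistic a c t * (1 - logistic a c t) \<le> a / exp (c * t)"
proof -
  define e where "e = exp (c * t)"
  have e: "0 < e" by (simp add: e_def)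
  then have "a + e \<noteq> 0" using assms by simp
  then have "logistic a c t * (1 - logistic a c t) = a * e / (a + e)^2"
    by (simp add: logistic_def e_def field_simps power2_eq_square)
  also have "\<dots> \<le> a * e / e^2"
    using assms e by (intro divide_left_mono power_mono) auto
  also have "\<dots> = a / e" by (simp add: power2_eq_square)
  finally show ?thesis by (simp add: e_def)
qed

lemma abs_higher_deriv_logistic_le:
  assumes a: "0 < a" and i: "i \<in> {1, 2, 3}"
  shows "\<bar>(deriv ^^ i) (logistic a c) t\<bar> \<le> \<bar>c\<bar>^i * (a / exp (c * t))"
proof -
  define L where "L = logistic a c t"
  define w where "w = L * (1 - L)"
  have L: "0 < L" "L < 1" using logistic_bounds[OF a] by (auto simp: L_def)
  have w: "0 \<le> w" "w \<le> a / exp (c * t)"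
    using L logistic_mult_one_minus_le[OF a] by (auto simp: w_def L_def)
  have "\<bar>1 - 2 * L\<bar> \<le> 1" using L by simp
  moreover have "\<bar>(1 - 2 * L)^2 - 2 * w\<bar> \<le> 1"
  proof -
    have "(1 - 2 * L)^2 - 2 * w = 1 - 6 * L * (1 - L)" by (simp add: w_def power2_eq_square algebra_simps)
    moreover have "L * (1 - L) \<le> 1/4" using zero_le_power2[of "2 * L - 1"] by (simp add: power2_eq_square algebra_simps)
    ultimately show ?thesis using L by (simp add: abs_le_iff mult_pos_pos)
  qed
  ultimately
  have "\<bar>(deriv ^^ i) (logistic a c) t\<bar> \<le> \<bar>c\<bar>^i * w"
    using i w(1) higher_deriv_logistic[OF a, of c]
    by (auto simp: L_def w_def abs_mult power_abs mult_left_le)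
  also have "\<dots> \<le> \<bar>c\<bar>^i * (a / exp (c * t))"
    using w by (intro mult_left_mono) auto
  finally show ?thesis .
qed

lemma deriv_logistic_param:
  assumes "0 < a"
  shows "deriv (\<lambda>b. logistic b c t) a = logistic a c t * (1 - logistic a c t) / a"
proof -
  define e where "e = exp (c * t)"
  have e: "0 < e" by (simp add: e_def)
  have "- e < a" using assms e by simp
  from higher_deriv_frac_add[OF this, of 0]
  have "deriv (\<lambda>b. logistic b c t) a = e / (a + e)^2"
    by (simp add: logistic_def e_def power2_eq_square)
  also have "\<dots> = logistic a c t * (1 - logistic a c t) / a"
    using assms e by (simp add: logistic_def flip: e_def) (simp add: field_simps power2_eq_square)
  finally show ?thesis .
qed

lemma abs_deriv_deriv_logistic_param_le:
  assumes a: "0 < a"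
  shows "\<bar>deriv (\<lambda>t. deriv (\<lambda>b. logistic b c t) a) s\<bar> \<le> \<bar>c\<bar> / exp (c * s)"
proof -
  define L where "L = logistic a c s"
  have L: "0 < L" "L < 1" using logistic_bounds[OF a] by (auto simp: L_def)
  have "deriv (\<lambda>t. deriv (\<lambda>b. logistic b c t) a) s
      = deriv (\<lambda>t. logistic a c t * (1 - logistic a c t) / a) s"
    using a by (simp add: deriv_logistic_param)
  also have "\<dots> = - c * (L * (1 - L)) * (1 - 2 * L) / a"
    unfolding L_def
    by (rule DERIV_imp_deriv)
      (use a in \<open>auto intro!: derivative_eq_intros has_real_derivative_logistic[OF a] simp: field_simps\<close>)
  finally have "\<bar>deriv (\<lambda>t. deriv (\<lambda>b. logistic b c t) a) s\<bar> = \<bar>c\<bar> * (L * (1 - L)) * \<bar>1 - 2 * L\<bar> / a"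
    using a L by (simp add: abs_mult abs_divide)
  also have "\<dots> \<le> \<bar>c\<bar> * (a / exp (c * s)) * 1 / a"
    using a L logistic_mult_one_minus_le[OF a, of c s]
    by (intro divide_right_mono mult_mono) (auto simp: L_def)
  also have "\<dots> = \<bar>c\<bar> / exp (c * s)" using a by simp
  finally show ?thesis .
qed

lemma ln_power_mult_div_powr_le:
  fixes n \<epsilon> a A s :: real
  assumes n: "1 \<le> n" and \<epsilon>: "0 < \<epsilon>" and a: "0 \<le> a" "a \<le> A"
  shows "\<bar>2 * ln n\<bar>^i * (a / n powr (2 * s)) \<le> 2^i * A / (\<epsilon>^i * n powr (2 * s - real i * \<epsilon>))"
proof -
  have "\<bar>2 * ln n\<bar>^i = 2^i * ln n ^ i"
    using n by (simp add: power_mult_distrib)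
  also have "\<dots> \<le> 2^i * (n powr \<epsilon> / \<epsilon>)^i"
    using n \<epsilon> by (intro mult_left_mono power_mono ln_powr_bound) auto
  also have "\<dots> = 2^i * n powr (real i * \<epsilon>) / \<epsilon>^i"
    using n by (simp add: power_divide powr_power)
  finally have "\<bar>2 * ln n\<bar>^i * (a / n powr (2 * s)) \<le> 2^i * n powr (real i * \<epsilon>) / \<epsilon>^i * (A / n powr (2 * s))"
    using a \<epsilon> by (intro mult_mono divide_right_mono) auto
  also have "\<dots> = 2^i * A / (\<epsilon>^i * n powr (2 * s - real i * \<epsilon>))"
    by (simp add: powr_diff field_simps)
  finally show ?thesis .
qed

lemma knorm_ge_one:
  assumes "k \<in> nonzero_lattice d"
  shows "1 \<le> knorm d k"
proof -
  obtain j where j: "j < d" "k j \<noteq> 0"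
    using assms by (auto simp: nonzero_lattice_def lattice_def) (meson not_le)
  have "1 \<le> \<bar>real_of_int (k j)\<bar>"
    using j(2) by linarith
  then have "1 \<le> (real_of_int (k j))^2"
    using one_le_power[of "\<bar>real_of_int (k j)\<bar>" 2] by simp
  also have "\<dots> \<le> (\<Sum>i<d. (real_of_int (k i))^2)"
    using j(1) by (intro member_le_sum) auto
  finally show ?thesis
    unfolding knorm_def by (rule real_sqrt_ge_one)
qed

lemma Ek_eq_logistic:
  assumes "0 < knorm d k"
  shows "Ek d k t a = logistic a (2 * ln (knorm d k)) t"
  using assms by (simp add: Ek_def logistic_def powr_def mult_ac)

lemma abs_higher_deriv_Ek_param_le:
  assumes "k \<in> nonzero_lattice d" "0 \<le> \<alpha>" "0 < i"
  shows "\<bar>(deriv ^^ i) (\<lambda>a. Ek d k s a) \<alpha>\<bar> \<le> fact i / knorm d k powr (2 * s * real i)"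
proof -
  have n: "1 \<le> knorm d k" using assms(1) by (rule knorm_ge_one)
  have "knorm d k powr (2 * s * real i) = (knorm d k powr (2 * s))^i"
    using n by (simp add: powr_power mult_ac)
  then show ?thesis
    using abs_higher_deriv_frac_add_le[of "knorm d k powr (2 * s)" \<alpha> i] n assms
    by (simp add: Ek_def)
qed

lemma abs_higher_deriv_Ek_le:
  assumes "k \<in> nonzero_lattice d" "0 < \<alpha>" "\<alpha> \<le> A" "0 < \<epsilon>" "i \<in> {1, 2, 3}"
  shows "\<bar>(deriv ^^ i) (\<lambda>t. Ek d k t \<alpha>) s\<bar> \<le> 2^i * A / (\<epsilon>^i * knorm d k powr (2 * s - real i * \<epsilon>))"
proof -
  define n where "n = knorm d k"
  have n: "1 \<le> n" unfolding n_def using assms(1) by (rule knorm_ge_one)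
  have "(\<lambda>t. Ek d k t \<alpha>) = logistic \<alpha> (2 * ln n)"
    using n by (simp add: Ek_eq_logistic n_def)
  moreover have "exp (2 * ln n * s) = n powr (2 * s)"
    using n by (simp add: powr_def mult_ac)
  ultimately have "\<bar>(deriv ^^ i) (\<lambda>t. Ek d k t \<alpha>) s\<bar> \<le> \<bar>2 * ln n\<bar>^i * (\<alpha> / n powr (2 * s))"
    using abs_higher_deriv_logistic_le[OF assms(2,5)] by metis
  also have "\<dots> \<le> 2^i * A / (\<epsilon>^i * n powr (2 * s - real i * \<epsilon>))"
    using n assms by (intro ln_power_mult_div_powr_le) auto
  finally show ?thesis by (simp add: n_def)
qed

lemma abs_deriv_deriv_Ek_le:
  assumes "k \<in> nonzero_lattice d" "0 < \<alpha>" "0 < \<epsilon>"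
  shows "\<bar>deriv (\<lambda>t. deriv (\<lambda>a. Ek d k t a) \<alpha>) s\<bar> \<le> 2 / (\<epsilon> * knorm d k powr (2 * s - \<epsilon>))"
proof -
  define n where "n = knorm d k"
  have n: "1 \<le> n" unfolding n_def using assms(1) by (rule knorm_ge_one)
  have "(\<lambda>t. deriv (\<lambda>a. Ek d k t a) \<alpha>) = (\<lambda>t. deriv (\<lambda>a. logistic a (2 * ln n) t) \<alpha>)"
    using n by (simp add: Ek_eq_logistic n_def)
  moreover have "exp (2 * ln n * s) = n powr (2 * s)"
    using n by (simp add: powr_def mult_ac)
  ultimately have "\<bar>deriv (\<lambda>t. deriv (\<lambda>a. Ek d k t a) \<alpha>) s\<bar> \<le> \<bar>2 * ln n\<bar> / n powr (2 * s)"
    using abs_deriv_deriv_logistic_param_le[OF assms(2), of "2 * ln n" s] by metis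
  also have "\<dots> \<le> 2 / (\<epsilon> * n powr (2 * s - \<epsilon>))"
    using ln_power_mult_div_powr_le[where i = 1 and a = 1 and A = 1] n assms by simp
  finally show ?thesis by (simp add: n_def)
qed

theorem lemma3:
  fixes \<alpha>1 :: real
  assumes "0 < \<alpha>1"
  shows "\<exists>M :: nat \<Rightarrow> real. \<exists>M' :: real.
    (\<forall>i\<in>{1,2,3}. 0 < M i) \<and> 0 < M' \<and>
    (\<forall>(d::nat) (s0::real) s1 (\<alpha>0::real) g (\<epsilon>::real) s \<alpha>.
       1 \<le> d \<and> 0 < s0 \<and> s0 < s1 \<and> 0 < \<alpha>0 \<and> \<alpha>0 < \<alpha>1 \<and> L2_0 d g \<and> 0 < \<epsilon>
       \<and> s \<in> {s0..s1} \<and> \<alpha> \<in> {\<alpha>0..\<alpha>1} \<longrightarrow>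
       (\<forall>i::nat\<in>{1,2,3}.
          l2_bounded_by (nonzero_lattice d)
            (\<lambda>k. complex_of_real ((deriv ^^ i) (\<lambda>a. Ek d k s a) \<alpha>) * fourier_coeff d g k)
            (\<lambda>k. fact i / knorm d k powr (2 * s * real i) * cmod (fourier_coeff d g k)))
     \<and> (\<forall>i::nat\<in>{1,2,3}.
          l2_bounded_by (nonzero_lattice d)
            (\<lambda>k. complex_of_real ((deriv ^^ i) (\<lambda>t. Ek d k t \<alpha>) s) * fourier_coeff d g k)
            (\<lambda>k. M i / (\<epsilon> ^ i * knorm d k powr (2 * s - real i * \<epsilon>)) * cmod (fourier_coeff d g k)))
     \<and> l2_bounded_by (nonzero_lattice d)
            (\<lambda>k. complex_of_real (deriv (\<lambda>t. deriv (\<lambda>a. Ek d k t a) \<alpha>) s) * fourier_coeff d g k)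
            (\<lambda>k. M' / (\<epsilon> * knorm d k powr (2 * s - \<epsilon>)) * cmod (fourier_coeff d g k)))"
proof (intro exI[of _ "\<lambda>i. 2^i * \<alpha>1"] exI[of _ 2] conjI allI impI ballI l2_bounded_by_of_real_mult)
  fix d :: nat and s0 s1 \<alpha>0 \<epsilon> s \<alpha> :: real and g k
  assume "1 \<le> d \<and> 0 < s0 \<and> s0 < s1 \<and> 0 < \<alpha>0 \<and> \<alpha>0 < \<alpha>1 \<and> L2_0 d g \<and> 0 < \<epsilon>
       \<and> s \<in> {s0..s1} \<and> \<alpha> \<in> {\<alpha>0..\<alpha>1}"
  \<comment> \<open>The bounds hold for arbitrary coefficients; only these hypotheses are used.\<close>
  then have \<epsilon>: "0 < \<epsilon>" and \<alpha>: "0 < \<alpha>" "\<alpha> \<le> \<alpha>1" by auto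
  assume k: "k \<in> nonzero_lattice d"
  show "\<bar>(deriv ^^ i) (\<lambda>a. Ek d k s a) \<alpha>\<bar> \<le> fact i / knorm d k powr (2 * s * real i)"
    if "i \<in> {1, 2, 3}" for i :: nat
    using k \<alpha>(1) that by (intro abs_higher_deriv_Ek_param_le) auto
  show "\<bar>(deriv ^^ i) (\<lambda>t. Ek d k t \<alpha>) s\<bar> \<le> 2^i * \<alpha>1 / (\<epsilon>^i * knorm d k powr (2 * s - real i * \<epsilon>))"
    if "i \<in> {1, 2, 3}" for i :: nat
    using k \<alpha> \<epsilon> that by (rule abs_higher_deriv_Ek_le)
  show "\<bar>deriv (\<lambda>t. deriv (\<lambda>a. Ek d k t a) \<alpha>) s\<bar> \<le> 2 / (\<epsilon> * knorm d k powr (2 * s - \<epsilon>))"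
    using k \<alpha>(1) \<epsilon> by (rule abs_deriv_deriv_Ek_le)
qed (use assms in auto)

end
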